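(* Let $W$ satisfy the mixing assumptions in the context, and consider the iterates $\mathbf{x}^{(k)}=[x_1^{(k)};\dots;x_m^{(k)}]\in\mathbb{R}^{mn}$ of Algorithm DDS-F (described in the context), where all poll directions are unit vectors and the stepsizes satisfy $\alpha_i^{(k)}\le\alpha^{(k)}_{\max}$ for all $i,k$, for a positive sequence $\{\alpha^{(k)}_{\max}\}$. Let $\zeta:=\max(|\lambda_2(W)|,|\lambda_m(W)|)$, let $C_W\ge0$ be a constant with $\|\widehat W^j-A_m\|\le C_W\zeta^j$ for all $j\in\mathbb{N}$, and let $C_\zeta\ge0$ be a constant with $\sum_{j=0}^k\zeta^{k-j}\alpha^{(j)}_{\max}\le C_\zeta\alpha^{(k)}_{\max}$ for all $k\in\mathbb{N}$. Then for every $k\ge1$, $$\left\|\mathbf{x}^{(k)}-A_m\mathbf{x}^{(k)}\right\|\le\sqrt{m}\,C_W\left(\|\mathbf{x}^{(0)}\|\zeta^k+C_\zeta\alpha^{(k-1)}_{\max}\right).$$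
   Context: Setting: $m$ agents on an undirected connected graph $\mathcal{G}=(\{1,\dots,m\},\mathcal{E})$; $\mathcal{N}_i=\{j\neq i:(i,j)\in\mathcal{E}\}$. Mixing assumptions on $W=[w_{ij}]\in\mathbb{R}^{m\times m}$ with eigenvalues $\lambda_1(W)\ge\dots\ge\lambda_m(W)$: $W$ symmetric with nonnegative entries, $w_{ij}>0$ iff $i=j$ or $j\in\mathcal{N}_i$; $\lambda_1(W)=1$, $\lambda_2(W)<1$; $W\mathbf{1}=\mathbf{1}$; $-1<\lambda_m(W)\le0$. Notation: $\widehat W=W\otimes I_n$, $A_m=\frac1m(\mathbf{1}_m\mathbf{1}_m^\mathrm{T})\otimes I_n$. Algorithm DDS-F (local functions $f_i:\mathbb{R}^n\to\mathbb{R}$, forcing function $\rho:\mathbb{R}^+\to\mathbb{R}^+$, poll sets $D_i^{(k)}\subset\mathbb{R}^n$, stepsizes $\alpha_i^{(k)}>0$): start from $x_1^{(0)}=\dots=x_m^{(0)}$. At iteration $k$, each agent $i$ checks whether some $d\in D^{(k)}_i$ satisfies $f_i(x_i^{(k)}+\alpha_i^{(k)}d)\le f_i(x_i^{(k)})-\rho(\alpha_i^{(k)})$. If so, $x_i^{(k+1)}=\sum_{j\in\mathcal{N}_i\cup\{i\}}w_{ij}x_j^{(k)}+\alpha_i^{(k)}d$ (successful for $i$); otherwise $x_i^{(k+1)}=\sum_{j\in\mathcal{N}_i\cup\{i\}}w_{ij}x_j^{(k)}$ (unsuccessful for $i$). *)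

theory Defs
  imports "HOL-Analysis.Analysis"
begin

text \<open>Agents are indexed by a finite type 'm (so m = CARD('m)); local variables
live in real^'n.  A stacked vector [x_1;...;x_m] in R^{mn} is an element of
real^'n^'m, whose norm is exactly the Euclidean norm on R^{mn}.\<close>

text \<open>The action of W (Kronecker) I_n on a stacked vector.\<close>
definition Wkron :: "real^'m^'m \<Rightarrow> real^'n^'m \<Rightarrow> real^'n^'m" where
  "Wkron W X = (\<chi> i. \<Sum>j\<in>UNIV. (W $ i $ j) *\<^sub>R (X $ j))"

text \<open>The action of A_m = (1/m) 1 1^T (Kronecker) I_n on a stacked vector.\<close>
definition Am :: "real^'n^'m \<Rightarrow> real^'n^'m" where
  "Am X = (\<chi> i. inverse (real CARD('m)) *\<^sub>R (\<Sum>j\<in>UNIV. X $ j))"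

definition sorted_eigenvalues :: "real^'m^'m \<Rightarrow> (nat \<Rightarrow> real) \<Rightarrow> bool" where
  "sorted_eigenvalues W lam \<longleftrightarrow>
     (\<forall>t. det (W - t *\<^sub>R mat 1) = (\<Prod>i\<in>{1..CARD('m)}. (lam i - t))) \<and>
     (\<forall>i j. 1 \<le> i \<longrightarrow> i \<le> j \<longrightarrow> j \<le> CARD('m) \<longrightarrow> lam j \<le> lam i)"

end

theory Submission
  imports Defs
begin

text \<open>Write the iteration as x(k+1) = M x(k) + e(k) with M = W \<otimes> I_n. Block i of e(k)
is either 0 or a unit poll direction scaled by \<alpha>_i(k) \<le> \<alpha>max(k), so
norm (e(k)) \<le> sqrt m * \<alpha>max(k). Unrolling gives x(k) = M^k x(0) + \<Sum>j<k. M^(k-1-j) e(j),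
and A_m M = A_m because the columns of W sum to one; hence x(k) - A_m x(k) is the same
expression with every M^j replaced by M^j - A_m, of norm at most C_W \<zeta>^j, and C_\<zeta>
absorbs the resulting convolution sum. The spectral and connectivity hypotheses on W enter
only through the assumed bound defining C_W.\<close>

lemma linear_Wkron: "linear (Wkron W)"
  by (rule linearI) (simp_all add: Wkron_def vec_eq_iff scaleR_add_right sum.distrib scaleR_right.sum mult_ac)

lemma linear_Am: "linear Am"
  by (rule linearI) (simp_all add: Am_def vec_eq_iff scaleR_add_right sum.distrib scaleR_right.sum mult_ac)

lemma linear_funpow:
  fixes f :: "'a::real_vector \<Rightarrow> 'a"
  assumes "linear f"
  shows "linear (f ^^ n)"
proof (induction n)
  case 0
  show ?case using linear_id by (simp add: id_def)
next
  case (Suc n)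
  show ?case using linear_compose[OF Suc assms] by (simp add: o_def)
qed

lemma Am_Wkron:
  assumes "\<And>j. (\<Sum>i\<in>UNIV. W $ i $ j) = 1"
  shows "Am (Wkron W X) = Am X"
proof -
  have "(\<Sum>i\<in>UNIV. Wkron W X $ i) = (\<Sum>i\<in>UNIV. \<Sum>j\<in>UNIV. W $ i $ j *\<^sub>R X $ j)"
    by (simp add: Wkron_def)
  also have "\<dots> = (\<Sum>j\<in>UNIV. \<Sum>i\<in>UNIV. W $ i $ j *\<^sub>R X $ j)"
    by (rule sum.swap)
  also have "\<dots> = (\<Sum>j\<in>UNIV. X $ j)"
    by (simp add: scaleR_left.sum[symmetric] assms)
  finally show ?thesis by (simp add: Am_def)
qed

lemma norm_vec_le_sqrt_card:
  fixes X :: "'a::real_normed_vector^'m"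
  assumes "\<And>i. norm (X $ i) \<le> a"
  shows "norm X \<le> sqrt (real CARD('m)) * a"
proof -
  have "a \<ge> 0" using order_trans[OF norm_ge_zero assms] .
  have "norm X \<le> L2_set (\<lambda>i. a) (UNIV :: 'm set)"
    unfolding norm_vec_def using assms by (intro L2_set_mono) auto
  with \<open>a \<ge> 0\<close> show ?thesis by (simp add: L2_set_constant)
qed

lemma perturbed_iteration_expansion:
  assumes "linear T" and step: "\<And>k. x (Suc k) = T (x k) + e k"
  shows "x k = (T ^^ k) (x 0) + (\<Sum>j<k. (T ^^ (k - Suc j)) (e j))"
proof (induction k)
  case (Suc k)
  have "(\<Sum>j<k. T ((T ^^ (k - Suc j)) (e j))) = (\<Sum>j<k. (T ^^ (Suc k - Suc j)) (e j))"
  proof (rule sum.cong)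
    fix j assume "j \<in> {..<k}"
    then have "Suc k - Suc j = Suc (k - Suc j)" by simp
    then show "T ((T ^^ (k - Suc j)) (e j)) = (T ^^ (Suc k - Suc j)) (e j)" by simp
  qed simp
  then show ?case
    by (simp add: step Suc.IH linear_add[OF assms(1)] linear_sum[OF assms(1)])
qed simp

lemma consensus_error_bound:
  fixes T A :: "'a::euclidean_space \<Rightarrow> 'a"
  assumes "linear T" "linear A"
    and A_T: "\<And>X. A (T X) = A X"
    and contraction: "\<And>n. onorm (\<lambda>X. (T ^^ n) X - A X) \<le> C * \<zeta> ^ n"
    and step: "\<And>k. x (Suc k) = T (x k) + e k"
    and e_bound: "\<And>k. norm (e k) \<le> b k"
  shows "norm (x k - A (x k)) \<le> C * \<zeta> ^ k * norm (x 0) + C * (\<Sum>j<k. \<zeta> ^ (k - Suc j) * b j)"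
proof -
  define P where "P n X = (T ^^ n) X - A X" for n X
  have P_bound: "norm (P n X) \<le> C * \<zeta> ^ n * norm X" and P_coeff: "0 \<le> C * \<zeta> ^ n" for n X
  proof -
    have "bounded_linear (P n)"
      unfolding P_def linear_conv_bounded_linear[symmetric]
      by (intro linear_compose_sub linear_funpow assms(1,2))
    then have "norm (P n X) \<le> onorm (P n) * norm X" and "0 \<le> onorm (P n)"
      by (simp_all add: onorm onorm_pos_le)
    then show "norm (P n X) \<le> C * \<zeta> ^ n * norm X" and "0 \<le> C * \<zeta> ^ n"
      using contraction[of n] unfolding P_def[abs_def]
      by (meson mult_right_mono norm_ge_zero order_trans)+
  qed
  have A_funpow: "A ((T ^^ n) X) = A X" for n X
    by (induction n) (simp_all add: A_T)
  have "x k - A (x k) = P k (x 0) + (\<Sum>j<k. P (k - Suc j) (e j))"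
    unfolding perturbed_iteration_expansion[of T x e k, OF assms(1) step] P_def
    by (simp add: linear_add[OF assms(2)] linear_sum[OF assms(2)] A_funpow sum_subtractf)
  then have "norm (x k - A (x k)) \<le> norm (P k (x 0)) + (\<Sum>j<k. norm (P (k - Suc j) (e j)))"
    using norm_triangle_ineq[of "P k (x 0)" "\<Sum>j<k. P (k - Suc j) (e j)"]
      norm_sum[of "\<lambda>j. P (k - Suc j) (e j)" "{..<k}"] by simp
  also have "\<dots> \<le> C * \<zeta> ^ k * norm (x 0) + (\<Sum>j<k. C * \<zeta> ^ (k - Suc j) * b j)"
  proof (intro add_mono sum_mono P_bound)
    fix j
    have "norm (P (k - Suc j) (e j)) \<le> C * \<zeta> ^ (k - Suc j) * norm (e j)" by (rule P_bound)
    also have "\<dots> \<le> C * \<zeta> ^ (k - Suc j) * b j" by (rule mult_left_mono[OF e_bound P_coeff])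
    finally show "norm (P (k - Suc j) (e j)) \<le> C * \<zeta> ^ (k - Suc j) * b j" .
  qed
  finally show ?thesis by (simp add: sum_distrib_left mult.assoc)
qed

lemma consensus_error_bound_summable:
  fixes T A :: "'a::euclidean_space \<Rightarrow> 'a"
  assumes "linear T" "linear A" "\<And>X. A (T X) = A X"
    and "\<And>n. onorm (\<lambda>X. (T ^^ n) X - A X) \<le> C * \<zeta> ^ n" "0 \<le> C"
    and "\<And>k. x (Suc k) = T (x k) + e k"
    and e_bound: "\<And>k. norm (e k) \<le> c * s k" "0 \<le> c"
    and summable: "\<And>k. (\<Sum>j\<le>k. \<zeta> ^ (k - j) * s j) \<le> C_s * s k"
  shows "norm (x (Suc k) - A (x (Suc k))) \<le> C * \<zeta> ^ Suc k * norm (x 0) + C * (c * (C_s * s k))"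
proof -
  have "(\<Sum>j<Suc k. \<zeta> ^ (Suc k - Suc j) * (c * s j)) = c * (\<Sum>j\<le>k. \<zeta> ^ (k - j) * s j)"
    by (simp add: lessThan_Suc_atMost sum_distrib_left mult_ac)
  also have "\<dots> \<le> c * (C_s * s k)"
    using summable \<open>0 \<le> c\<close> by (rule mult_left_mono)
  finally have "C * (\<Sum>j<Suc k. \<zeta> ^ (Suc k - Suc j) * (c * s j)) \<le> C * (c * (C_s * s k))"
    using \<open>0 \<le> C\<close> by (rule mult_left_mono)
  then show ?thesis
    using consensus_error_bound[where b = "\<lambda>j. c * s j" and k = "Suc k", OF assms(1-4,6) e_bound(1)]
    by linarith
qed

lemma neighbour_sum_eq_Wkron:
  assumes "\<And>j. j \<noteq> i \<Longrightarrow> \<not> E i j \<Longrightarrow> W $ i $ j = 0"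
  shows "(\<Sum>j\<in>{j. j \<noteq> i \<and> E i j} \<union> {i}. W $ i $ j *\<^sub>R X $ j) = Wkron W X $ i"
proof -
  have "(\<Sum>j\<in>{j. j \<noteq> i \<and> E i j} \<union> {i}. W $ i $ j *\<^sub>R X $ j) = (\<Sum>j\<in>UNIV. W $ i $ j *\<^sub>R X $ j)"
  proof (rule sum.mono_neutral_left)
    show "\<forall>j\<in>UNIV - ({j. j \<noteq> i \<and> E i j} \<union> {i}). W $ i $ j *\<^sub>R X $ j = 0"
      using assms by auto
  qed auto
  then show ?thesis by (simp add: Wkron_def)
qed

lemma norm_diff_blockwise_step_le:
  fixes X Y :: "'a::real_normed_vector^'m"
  assumes step: "\<And>i. X $ i = Y $ i \<or> (\<exists>d. norm d = 1 \<and> X $ i = Y $ i + a i *\<^sub>R d)"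
    and "\<And>i. 0 \<le> a i" "\<And>i. a i \<le> a_max"
  shows "norm (X - Y) \<le> sqrt (real CARD('m)) * a_max"
proof (rule norm_vec_le_sqrt_card)
  show "norm ((X - Y) $ i) \<le> a_max" for i
    using step[of i] assms(2,3)[of i] by auto
qed

lemma dds_f_step_deviation:
  fixes W :: "real^'m^'m" and x :: "nat \<Rightarrow> real^'n^'m"
  assumes W_support: "\<And>i j. j \<noteq> i \<Longrightarrow> \<not> E i j \<Longrightarrow> W $ i $ j = 0"
    and unit_dirs: "\<forall>k i d. d \<in> D k i \<longrightarrow> norm d = 1"
    and alpha_pos: "\<forall>k i. \<alpha> k i > 0"
    and alpha_le: "\<forall>k i. \<alpha> k i \<le> \<alpha>max k"
    and step_succ: "\<forall>k i. (\<exists>d\<in>D k i. P k i d) \<longrightarrow> (\<exists>d\<in>D k i. P k i d \<and>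
           x (Suc k) $ i = (\<Sum>j\<in>{j. j \<noteq> i \<and> E i j} \<union> {i}. W $ i $ j *\<^sub>R x k $ j) + \<alpha> k i *\<^sub>R d)"
    and step_unsucc: "\<forall>k i. \<not> (\<exists>d\<in>D k i. P k i d) \<longrightarrow>
           x (Suc k) $ i = (\<Sum>j\<in>{j. j \<noteq> i \<and> E i j} \<union> {i}. W $ i $ j *\<^sub>R x k $ j)"
  shows "norm (x (Suc k) - Wkron W (x k)) \<le> sqrt (real CARD('m)) * \<alpha>max k"
proof (rule norm_diff_blockwise_step_le[where a = "\<alpha> k"])
  have neighbours: "(\<Sum>j\<in>{j. j \<noteq> i \<and> E i j} \<union> {i}. W $ i $ j *\<^sub>R X $ j) = Wkron W X $ i"
    for i and X :: "real^'n^'m"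
    using W_support by (rule neighbour_sum_eq_Wkron)
  show "x (Suc k) $ i = Wkron W (x k) $ i \<or>
      (\<exists>d. norm d = 1 \<and> x (Suc k) $ i = Wkron W (x k) $ i + \<alpha> k i *\<^sub>R d)" for i
  proof (cases "\<exists>d\<in>D k i. P k i d")
    case True
    then obtain d where "d \<in> D k i"
      and update: "x (Suc k) $ i = (\<Sum>j\<in>{j. j \<noteq> i \<and> E i j} \<union> {i}. W $ i $ j *\<^sub>R x k $ j) + \<alpha> k i *\<^sub>R d"
      using step_succ by blast
    then have "norm d = 1" using unit_dirs by blast
    moreover have "x (Suc k) $ i = Wkron W (x k) $ i + \<alpha> k i *\<^sub>R d"
      using update by (simp only: neighbours)
    ultimately show ?thesis by blast
  next
    case False
    then have "x (Suc k) $ i = Wkron W (x k) $ i"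
      using step_unsucc by (simp only: neighbours) blast
    then show ?thesis ..
  qed
  show "0 \<le> \<alpha> k i" for i using alpha_pos less_imp_le by blast
  show "\<alpha> k i \<le> \<alpha>max k" for i using alpha_le by blast
qed

theorem proposition2:
  fixes E :: "'m::finite \<Rightarrow> 'm \<Rightarrow> bool"
    and W :: "real^'m^'m"
    and lam :: "nat \<Rightarrow> real"
    and f :: "'m \<Rightarrow> real^'n \<Rightarrow> real"
    and \<rho> :: "real \<Rightarrow> real"
    and D :: "nat \<Rightarrow> 'm \<Rightarrow> (real^'n) set"
    and \<alpha> :: "nat \<Rightarrow> 'm \<Rightarrow> real"
    and \<alpha>max :: "nat \<Rightarrow> real"
    and x :: "nat \<Rightarrow> real^'n^'m"
    and \<zeta> C_W C_\<zeta> :: real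
  assumes m2: "CARD('m) \<ge> 2"
    and E_sym: "\<forall>i j. E i j \<longleftrightarrow> E j i"
    and E_irrefl: "\<forall>i. \<not> E i i"
    and E_conn: "\<forall>i j. E\<^sup>*\<^sup>* i j"
    and W_sym: "transpose W = W"
    and W_nonneg: "\<forall>i j. W $ i $ j \<ge> 0"
    and W_pos: "\<forall>i j. W $ i $ j > 0 \<longleftrightarrow> (i = j \<or> (j \<noteq> i \<and> E i j))"
    and W_stoch: "\<forall>i. (\<Sum>j\<in>UNIV. W $ i $ j) = 1"
    and eig: "sorted_eigenvalues W lam"
    and lam1: "lam 1 = 1"
    and lam2: "lam 2 < 1"
    and lamm: "-1 < lam (CARD('m))" "lam (CARD('m)) \<le> 0"
    and rho_pos: "\<forall>t>0. \<rho> t > 0"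
    and unit_dirs: "\<forall>k i d. d \<in> D k i \<longrightarrow> norm d = 1"
    and alpha_pos: "\<forall>k i. \<alpha> k i > 0"
    and alphamax_pos: "\<forall>k. \<alpha>max k > 0"
    and alpha_le: "\<forall>k i. \<alpha> k i \<le> \<alpha>max k"
    and x0: "\<forall>i j. x 0 $ i = x 0 $ j"
    and step_succ: "\<forall>k i. (\<exists>d\<in>D k i. f i (x k $ i + \<alpha> k i *\<^sub>R d) \<le> f i (x k $ i) - \<rho> (\<alpha> k i)) \<longrightarrow>
        (\<exists>d\<in>D k i. f i (x k $ i + \<alpha> k i *\<^sub>R d) \<le> f i (x k $ i) - \<rho> (\<alpha> k i) \<and>
           x (Suc k) $ i = (\<Sum>j\<in>{j. j \<noteq> i \<and> E i j} \<union> {i}. W $ i $ j *\<^sub>R x k $ j) + \<alpha> k i *\<^sub>R d)"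
    and step_unsucc: "\<forall>k i. \<not> (\<exists>d\<in>D k i. f i (x k $ i + \<alpha> k i *\<^sub>R d) \<le> f i (x k $ i) - \<rho> (\<alpha> k i)) \<longrightarrow>
           x (Suc k) $ i = (\<Sum>j\<in>{j. j \<noteq> i \<and> E i j} \<union> {i}. W $ i $ j *\<^sub>R x k $ j)"
    and zeta_def: "\<zeta> = max \<bar>lam 2\<bar> \<bar>lam (CARD('m))\<bar>"
    and CW_nonneg: "C_W \<ge> 0"
    and CW: "\<forall>j::nat. onorm (\<lambda>X::real^'n^'m. (Wkron W ^^ j) X - Am X) \<le> C_W * \<zeta> ^ j"
    and Czeta_nonneg: "C_\<zeta> \<ge> 0"
    and Czeta: "\<forall>k::nat. (\<Sum>j\<le>k. \<zeta> ^ (k - j) * \<alpha>max j) \<le> C_\<zeta> * \<alpha>max k"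
  shows "\<forall>k\<ge>1. norm (x k - Am (x k))
           \<le> sqrt (real CARD('m)) * C_W * (norm (x 0) * \<zeta> ^ k + C_\<zeta> * \<alpha>max (k - 1))"
proof (intro allI impI)
  fix k :: nat
  assume "k \<ge> 1"
  then obtain k' where k: "k = Suc k'" by (cases k) auto
  let ?sm = "sqrt (real CARD('m))"
  have W_support: "W $ i $ j = 0" if "j \<noteq> i" "\<not> E i j" for i j
    using W_nonneg W_pos that by (metis less_eq_real_def)
  note deviation = dds_f_step_deviation[OF W_support unit_dirs alpha_pos alpha_le step_succ step_unsucc]
  have columns: "(\<Sum>i\<in>UNIV. W $ i $ j) = 1" for j
  proof -
    have "W $ i $ j = W $ j $ i" for i
      using W_sym by (metis transpose_def vec_lambda_beta)
    then show ?thesis using W_stoch by simp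
  qed
  have "0 \<le> \<zeta>" using zeta_def by simp
  then have "0 \<le> C_W * (norm (x 0) * \<zeta> ^ k)"
    using CW_nonneg by (intro mult_nonneg_nonneg norm_ge_zero zero_le_power)
  moreover have "1 \<le> ?sm" using m2 by simp
  ultimately have init: "C_W * \<zeta> ^ k * norm (x 0) \<le> ?sm * C_W * (norm (x 0) * \<zeta> ^ k)"
    using mult_right_mono[of 1 ?sm "C_W * (norm (x 0) * \<zeta> ^ k)"] by (simp add: mult_ac)
  have "norm (x k - Am (x k)) \<le> C_W * \<zeta> ^ k * norm (x 0) + C_W * (?sm * (C_\<zeta> * \<alpha>max k'))"
    unfolding k
    by (rule consensus_error_bound_summable[OF linear_Wkron linear_Am Am_Wkron[OF columns]
          CW[rule_format] CW_nonneg _ deviation _ Czeta[rule_format]]) simp_all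
  with init show "norm (x k - Am (x k)) \<le> ?sm * C_W * (norm (x 0) * \<zeta> ^ k + C_\<zeta> * \<alpha>max (k - 1))"
    by (simp add: k distrib_left mult_ac)
qed

end
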